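(* Let $p\in(0,1)$ and $u\in(0,1)$ with $u\ne p$. Let $S_0(x)=u+(1-u)x$, $S_1(x)=ux$, and let $\mu_u$ be the unique probability measure on $[0,1]$ satisfying $\mu_u=(1-p)\mu_u\circ S_0^{-1}+p\,\mu_u\circ S_1^{-1}$ (equivalently, the law of $\Theta_\infty(u)=\sum_{k\ge0}u^{T_k}((1-u)/u)^k$, where $T_k=G_0+\dots+G_k$ with $G_i$ IID, $P(G_0=n)=p^{n-1}(1-p)$, $n\ge1$). Then $\mu_u$ is singular with respect to Lebesgue measure. *)

theory Defs
  imports "HOL-Probability.Probability"
begin

definition singular_lebesgue :: "real measure \<Rightarrow> bool" where
  "singular_lebesgue M \<longleftrightarrow>
     (\<exists>N \<in> sets borel. emeasure lborel N = 0 \<and> emeasure M (space M - N) = 0)"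

end

theory Submission
  imports Defs
begin

text \<open>Let \<open>g\<^sub>n\<close> be the square root of the likelihood ratio of \<open>\<mu>\<close> against Lebesgue measure on the
  \<open>2\<^sup>n\<close> intervals of level \<open>n\<close> of the iterated function system: on the interval with address
  \<open>d\<^sub>1 \<dots> d\<^sub>n\<close> it is the product of \<open>sqrt ((1 - p) / (1 - u))\<close> for each digit 0 and of
  \<open>sqrt (p / u)\<close> for each digit 1. Self-similarity of both measures gives
  \<open>\<integral> g\<^sub>n d\<lambda> = \<integral> 1 / g\<^sub>n d\<mu> = \<rho>\<^sup>n\<close> with the Hellinger affinity
  \<open>\<rho> = sqrt (p u) + sqrt ((1 - p) (1 - u))\<close>, which is \<open>< 1\<close> because \<open>p \<noteq> u\<close>.
  By Markov's inequality \<open>\<lambda> {g\<^sub>n \<ge> 1}\<close> and \<open>\<mu> {g\<^sub>n < 1}\<close> are at most \<open>\<rho>\<^sup>n\<close>, so by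
  Borel--Cantelli the set where \<open>g\<^sub>n \<ge> 1\<close> infinitely often is Lebesgue-null and carries \<open>\<mu>\<close>.\<close>

lemma nn_integral_self_similar:
  fixes M :: "real measure" and S0 S1 :: "real \<Rightarrow> real" and c0 c1 :: ennreal
  assumes sets_M: "sets M = sets borel"
    and S: "S0 \<in> borel_measurable borel" "S1 \<in> borel_measurable borel"
    and self_similar: "\<And>A. A \<in> sets borel \<Longrightarrow>
      emeasure M A = c0 * emeasure M (S0 -` A) + c1 * emeasure M (S1 -` A)"
    and f: "f \<in> borel_measurable borel"
  shows "(\<integral>\<^sup>+x. f x \<partial>M) = c0 * (\<integral>\<^sup>+x. f (S0 x) \<partial>M) + c1 * (\<integral>\<^sup>+x. f (S1 x) \<partial>M)"
proof -
  have meas_M: "g \<in> borel_measurable M" "(\<lambda>x. g (S0 x)) \<in> borel_measurable M"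
    "(\<lambda>x. g (S1 x)) \<in> borel_measurable M"
    if "g \<in> borel_measurable borel" for g :: "real \<Rightarrow> ennreal"
    using that S sets_M by (simp_all cong: measurable_cong_sets)
  from f show ?thesis
  proof (induct rule: borel_measurable_induct)
    case (cong f g)
    then show ?case by simp
  next
    case (set A)
    then have "S0 -` A \<in> sets M" "S1 -` A \<in> sets M"
      using measurable_sets[OF S(1)] measurable_sets[OF S(2)] sets_M by auto
    moreover have "(\<lambda>x. indicator A (S0 x) :: ennreal) = indicator (S0 -` A)"
      "(\<lambda>x. indicator A (S1 x) :: ennreal) = indicator (S1 -` A)"
      by (auto simp: indicator_def)
    ultimately show ?case using set self_similar[of A] sets_M by simp
  next
    case (mult g c)
    then show ?case by (simp add: meas_M nn_integral_cmult algebra_simps)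
  next
    case (add g h)
    then show ?case by (simp add: meas_M nn_integral_add algebra_simps)
  next
    case (seq U)
    have mono: "incseq (\<lambda>i x. U i (S0 x))" "incseq (\<lambda>i x. U i (S1 x))"
      using seq(4) by (auto simp: incseq_def le_fun_def)
    have "(\<integral>\<^sup>+x. (SUP i. U i) x \<partial>M) = (SUP i. \<integral>\<^sup>+x. U i x \<partial>M)"
      using seq by (simp add: meas_M nn_integral_monotone_convergence_SUP image_comp)
    also have "\<dots> = (SUP i. c0 * (\<integral>\<^sup>+x. U i (S0 x) \<partial>M) + c1 * (\<integral>\<^sup>+x. U i (S1 x) \<partial>M))"
      using seq(3) by simp
    also have "\<dots> = c0 * (SUP i. \<integral>\<^sup>+x. U i (S0 x) \<partial>M) + c1 * (SUP i. \<integral>\<^sup>+x. U i (S1 x) \<partial>M)"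
      using mono
      by (subst ennreal_SUP_add)
         (auto simp: incseq_def le_fun_def SUP_mult_left_ennreal intro!: mult_left_mono nn_integral_mono)
    also have "\<dots> = c0 * (\<integral>\<^sup>+x. (SUP i. U i) (S0 x) \<partial>M) + c1 * (\<integral>\<^sup>+x. (SUP i. U i) (S1 x) \<partial>M)"
      using mono seq(1) by (simp add: meas_M nn_integral_monotone_convergence_SUP image_comp)
    finally show ?case .
  qed
qed

text \<open>On \<open>[0, 1)\<close> rather than \<open>[0, 1]\<close> both branches are exact: \<open>x \<mapsto> u x\<close> maps \<open>[0, 1)\<close> onto
  \<open>[0, u)\<close> and \<open>x \<mapsto> u + (1 - u) x\<close> onto \<open>[u, 1)\<close>.\<close>

lemma nn_integral_uniform_unit_interval_self_similar:
  fixes u :: real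
  assumes u: "0 < u" "u < 1" and [measurable]: "f \<in> borel_measurable borel"
  defines "U \<equiv> uniform_measure lborel {0..<1::real}"
  shows "(\<integral>\<^sup>+x. f x \<partial>U) =
    ennreal (1 - u) * (\<integral>\<^sup>+x. f (u + (1 - u) * x) \<partial>U) + ennreal u * (\<integral>\<^sup>+x. f (u * x) \<partial>U)"
proof -
  have integral_U: "(\<integral>\<^sup>+x. g x \<partial>U) = (\<integral>\<^sup>+x. g x * indicator {0..<1} x \<partial>lborel)"
    if [measurable]: "g \<in> borel_measurable borel" for g
    by (simp add: U_def nn_integral_uniform_measure divide_ennreal_def)
  have "indicator {0..<1} x = (indicator {u..<1} x + indicator {0..<u} x :: ennreal)" for x
    using u by (auto simp: indicator_def)
  then have "(\<integral>\<^sup>+x. f x * indicator {0..<1} x \<partial>lborel) =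
      (\<integral>\<^sup>+x. f x * indicator {u..<1} x \<partial>lborel) + (\<integral>\<^sup>+x. f x * indicator {0..<u} x \<partial>lborel)"
    by (simp add: distrib_left nn_integral_add)
  also have "(\<integral>\<^sup>+x. f x * indicator {u..<1} x \<partial>lborel) =
      ennreal (1 - u) * (\<integral>\<^sup>+x. f (u + (1 - u) * x) * indicator {0..<1} x \<partial>lborel)"
  proof -
    have "u + (1 - u) * x < 1 \<longleftrightarrow> (1 - u) * x < (1 - u) * 1" for x
      by (simp add: algebra_simps)
    then have "indicator {u..<1} (u + (1 - u) * x) = (indicator {0..<1} x :: ennreal)" for x
      using u by (auto simp: indicator_def zero_le_mult_iff mult_less_cancel_left_pos)
    then show ?thesis using u by (subst nn_integral_real_affine[where t = u and c = "1 - u"]) auto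
  qed
  also have "(\<integral>\<^sup>+x. f x * indicator {0..<u} x \<partial>lborel) =
      ennreal u * (\<integral>\<^sup>+x. f (u * x) * indicator {0..<1} x \<partial>lborel)"
  proof -
    have "indicator {0..<u} (u * x) = (indicator {0..<1} x :: ennreal)" for x
      using u by (auto simp: indicator_def zero_le_mult_iff)
    then show ?thesis using u by (subst nn_integral_real_affine[where t = 0 and c = u]) auto
  qed
  finally show ?thesis by (simp add: integral_U)
qed

fun digit_product :: "real \<Rightarrow> real \<Rightarrow> real \<Rightarrow> nat \<Rightarrow> real \<Rightarrow> real" where
  "digit_product u a0 a1 0 x = 1"
| "digit_product u a0 a1 (Suc n) x =
    (if x < u then a1 * digit_product u a0 a1 n (x / u)
     else a0 * digit_product u a0 a1 n ((x - u) / (1 - u)))"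

lemma borel_measurable_digit_product[measurable]:
  "digit_product u a0 a1 n \<in> borel_measurable borel"
proof (induction n)
  case (Suc n)
  note [measurable] = Suc
  show ?case
    unfolding digit_product.simps(2)[abs_def] by measurable
qed simp

lemma digit_product_nonneg: "0 \<le> a0 \<Longrightarrow> 0 \<le> a1 \<Longrightarrow> 0 \<le> digit_product u a0 a1 n x"
  by (induction n arbitrary: x) auto

lemma digit_product_pos: "0 < a0 \<Longrightarrow> 0 < a1 \<Longrightarrow> 0 < digit_product u a0 a1 n x"
  by (induction n arbitrary: x) auto

lemma digit_product_inverse:
  "digit_product u (inverse a0) (inverse a1) n x = inverse (digit_product u a0 a1 n x)"
  by (induction n arbitrary: x) auto

lemma nn_integral_digit_product:
  fixes M :: "real measure" and u c0 c1 a0 a1 :: real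
  assumes sets_M: "sets M = sets borel" and u: "0 < u" "u < 1"
    and c: "0 \<le> c0" "0 \<le> c1" and a: "0 \<le> a0" "0 \<le> a1"
    and unit_interval: "AE x in M. 0 \<le> x \<and> x < 1"
    and self_similar: "\<And>f. f \<in> borel_measurable borel \<Longrightarrow> (\<integral>\<^sup>+x. f x \<partial>M) =
      ennreal c0 * (\<integral>\<^sup>+x. f (u + (1 - u) * x) \<partial>M) + ennreal c1 * (\<integral>\<^sup>+x. f (u * x) \<partial>M)"
  shows "(\<integral>\<^sup>+x. ennreal (digit_product u a0 a1 n x) \<partial>M) =
    ennreal ((c0 * a0 + c1 * a1) ^ n) * emeasure M (space M)"
proof (induction n)
  case 0
  then show ?case by simp
next
  case (Suc n)
  let ?I = "\<integral>\<^sup>+x. ennreal (digit_product u a0 a1 n x) \<partial>M"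
  have "AE x in M. digit_product u a0 a1 (Suc n) (u + (1 - u) * x) = a0 * digit_product u a0 a1 n x"
    using unit_interval
  proof eventually_elim
    case (elim x)
    then have "0 \<le> (1 - u) * x" using u by simp
    then have "\<not> u + (1 - u) * x < u" by linarith
    moreover have "(u + (1 - u) * x - u) / (1 - u) = x" using u by simp
    ultimately show ?case by simp
  qed
  then have S0: "(\<integral>\<^sup>+x. ennreal (digit_product u a0 a1 (Suc n) (u + (1 - u) * x)) \<partial>M) = ennreal a0 * ?I"
    using a sets_M
    by (subst nn_integral_cmult[symmetric])
       (auto simp: ennreal_mult digit_product_nonneg measurable_cong_sets[OF sets_M refl]
         intro!: nn_integral_cong_AE)
  have "AE x in M. digit_product u a0 a1 (Suc n) (u * x) = a1 * digit_product u a0 a1 n x"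
    using unit_interval by eventually_elim (use u in auto)
  then have S1: "(\<integral>\<^sup>+x. ennreal (digit_product u a0 a1 (Suc n) (u * x)) \<partial>M) = ennreal a1 * ?I"
    using a sets_M
    by (subst nn_integral_cmult[symmetric])
       (auto simp: ennreal_mult digit_product_nonneg measurable_cong_sets[OF sets_M refl]
         intro!: nn_integral_cong_AE)
  have "(\<lambda>x. ennreal (digit_product u a0 a1 (Suc n) x)) \<in> borel_measurable borel"
    by measurable
  from self_similar[OF this]
  have "(\<integral>\<^sup>+x. ennreal (digit_product u a0 a1 (Suc n) x) \<partial>M) =
      ennreal c0 * (ennreal a0 * ?I) + ennreal c1 * (ennreal a1 * ?I)"
    by (simp only: S0 S1)
  also have "\<dots> = ennreal (c0 * a0 + c1 * a1) * ?I"
    using c a by (simp add: ennreal_mult distrib_right mult.assoc)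
  also have "\<dots> = ennreal ((c0 * a0 + c1 * a1) ^ Suc n) * emeasure M (space M)"
    using c a by (simp add: Suc ennreal_mult' mult.assoc)
  finally show ?case .
qed

lemma nn_integral_digit_product_uniform:
  fixes u a0 a1 :: real
  assumes u: "0 < u" "u < 1" and a: "0 \<le> a0" "0 \<le> a1"
  shows "(\<integral>\<^sup>+x. ennreal (digit_product u a0 a1 n x) \<partial>uniform_measure lborel {0..<1}) =
    ennreal (((1 - u) * a0 + u * a1) ^ n)"
proof -
  have "AE x in uniform_measure lborel {0..<1::real}. 0 \<le> x \<and> x < 1"
    by (intro AE_uniform_measureI) auto
  note integral_eq = nn_integral_digit_product[OF _ u _ _ a this
      nn_integral_uniform_unit_interval_self_similar[OF u]]
  show ?thesis
    using u by (subst integral_eq) auto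
qed

lemma emeasure_ge_1_le_nn_integral:
  assumes [measurable]: "f \<in> borel_measurable M"
  shows "emeasure M {x \<in> space M. 1 \<le> f x} \<le> (\<integral>\<^sup>+x. f x \<partial>M)"
proof -
  have "{x \<in> space M. 1 \<le> f x} \<in> sets M" by measurable
  then have "emeasure M {x \<in> space M. 1 \<le> f x} = (\<integral>\<^sup>+x. indicator {x \<in> space M. 1 \<le> f x} x \<partial>M)"
    by simp
  also have "\<dots> \<le> (\<integral>\<^sup>+x. f x \<partial>M)"
    by (intro nn_integral_mono) (auto simp: indicator_def)
  finally show ?thesis .
qed

lemma limsup_null_sets_geometric:
  fixes r :: real
  assumes [measurable]: "\<And>n. A n \<in> sets M"
    and bound: "\<And>n. emeasure M (A n) \<le> ennreal (r ^ n)" and r: "0 \<le> r" "r < 1"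
  shows "limsup A \<in> null_sets M"
proof (rule borel_cantelli_limsup1)
  show "emeasure M (A n) < \<infinity>" for n
    using bound[of n] by (simp add: le_less_trans)
  have "measure M (A n) \<le> r ^ n" for n
    using enn2real_mono[OF bound[of n]] r by (simp add: measure_def)
  then show "summable (\<lambda>n. measure M (A n))"
    using r by (intro summable_comparison_test'[OF summable_geometric]) auto
qed simp

lemma singular_lebesgueI_limsup:
  fixes M :: "real measure"
  assumes sets_M: "sets M = sets borel"
    and lebesgue_null: "limsup A \<in> null_sets lborel"
    and support: "AE x in M. x \<in> C"
    and null: "limsup (\<lambda>n. C - A n) \<in> null_sets M"
  shows "singular_lebesgue M"
proof -
  have limsup_cover: "x \<in> limsup A" if "x \<in> C" "x \<notin> limsup (\<lambda>n. C - A n)" for x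
  proof (rule ccontr)
    assume "x \<notin> limsup A"
    then obtain n0 where "\<forall>m\<ge>n0. x \<notin> A m" by (auto simp: limsup_INF_SUP)
    then have "\<exists>m\<ge>n. x \<in> C - A m" for n using \<open>x \<in> C\<close> by (intro exI[of _ "max n n0"]) auto
    then show False using that(2) by (auto simp: limsup_INF_SUP)
  qed
  have "AE x in M. x \<in> limsup A"
    using support AE_not_in[OF null] by eventually_elim (rule limsup_cover)
  then have "AE x in M. x \<notin> space M - limsup A"
    by (rule eventually_mono) simp
  moreover have N: "limsup A \<in> sets borel" "emeasure lborel (limsup A) = 0"
    using lebesgue_null by auto
  moreover have "space M - limsup A \<in> sets M"
    using N sets_M by (metis sets.compl_sets)
  ultimately show ?thesis
    unfolding singular_lebesgue_def by (metis AE_iff_null_sets null_setsD1)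
qed

lemma singular_lebesgueI_ratio_bounds:
  fixes M :: "real measure" and g :: "nat \<Rightarrow> real \<Rightarrow> real" and r :: real
  assumes sets_M: "sets M = sets borel" and support: "AE x in M. 0 \<le> x \<and> x < 1"
    and [measurable]: "\<And>n. g n \<in> borel_measurable borel" and g_pos: "\<And>n x. 0 < g n x"
    and r: "0 \<le> r" "r < 1"
    and lebesgue_bound:
      "\<And>n. (\<integral>\<^sup>+x. ennreal (g n x) \<partial>uniform_measure lborel {0..<1}) \<le> ennreal (r ^ n)"
    and M_bound: "\<And>n. (\<integral>\<^sup>+x. ennreal (inverse (g n x)) \<partial>M) \<le> ennreal (r ^ n)"
  shows "singular_lebesgue M"
proof -
  define A where "A n = {x \<in> {0..<1}. 1 \<le> g n x}" for n
  have [measurable]: "A n \<in> sets borel" for n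
    unfolding A_def by measurable
  have "emeasure lborel (A n) \<le> ennreal (r ^ n)" for n
  proof -
    have "A n = {0..<1} \<inter> {x \<in> space (uniform_measure lborel {0..<1}). 1 \<le> ennreal (g n x)}"
      by (auto simp: A_def)
    then have "emeasure lborel (A n) =
        emeasure (uniform_measure lborel {0..<1}) {x \<in> space (uniform_measure lborel {0..<1}). 1 \<le> ennreal (g n x)}"
      by (simp add: divide_ennreal_def)
    also have "\<dots> \<le> (\<integral>\<^sup>+x. ennreal (g n x) \<partial>uniform_measure lborel {0..<1})"
      by (rule emeasure_ge_1_le_nn_integral) simp
    finally show ?thesis using lebesgue_bound order_trans by blast
  qed
  then have "limsup A \<in> null_sets lborel"
    using r by (intro limsup_null_sets_geometric) auto
  moreover have "emeasure M ({0..<1} - A n) \<le> ennreal (r ^ n)" for n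
  proof -
    have "{0..<1} - A n \<subseteq> {x \<in> space M. 1 \<le> ennreal (inverse (g n x))}"
      using g_pos sets_eq_imp_space_eq[OF sets_M] by (auto simp: A_def one_le_inverse_iff less_imp_le not_le)
    then have "emeasure M ({0..<1} - A n) \<le> emeasure M {x \<in> space M. 1 \<le> ennreal (inverse (g n x))}"
      using sets_M by (intro emeasure_mono) (auto simp: measurable_cong_sets[OF sets_M refl])
    also have "\<dots> \<le> (\<integral>\<^sup>+x. ennreal (inverse (g n x)) \<partial>M)"
      using sets_M by (intro emeasure_ge_1_le_nn_integral) (simp cong: measurable_cong_sets)
    finally show ?thesis using M_bound order_trans by blast
  qed
  then have "limsup (\<lambda>n. {0..<1} - A n) \<in> null_sets M"
    using r sets_M by (intro limsup_null_sets_geometric) auto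
  moreover have "AE x in M. x \<in> {0..<1}"
    using support by simp
  ultimately show ?thesis
    using sets_M by (intro singular_lebesgueI_limsup[of M A "{0..<1}"]) auto
qed

lemma mult_sqrt_divide: "0 < a \<Longrightarrow> 0 \<le> b \<Longrightarrow> a * sqrt (b / a) = sqrt (a * b)"
  by (metis less_eq_real_def real_div_sqrt real_sqrt_divide real_sqrt_mult times_divide_eq_left
      times_divide_eq_right)

lemma sqrt_mult_add_sqrt_mult_lt_1:
  fixes p u :: real
  assumes "0 \<le> p" "p \<le> 1" "0 \<le> u" "u \<le> 1" "p \<noteq> u"
  shows "sqrt (p * u) + sqrt ((1 - p) * (1 - u)) < 1"
proof -
  have "0 < (sqrt p - sqrt u)\<^sup>2"
    using assms by simp
  then have "2 * sqrt (p * u) < p + u"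
    using assms by (simp add: power2_eq_square algebra_simps real_sqrt_mult)
  moreover have "0 \<le> (sqrt (1 - p) - sqrt (1 - u))\<^sup>2"
    by simp
  then have "2 * (sqrt (1 - p) * sqrt (1 - u)) \<le> (1 - p) + (1 - u)"
    using assms by (simp add: power2_eq_square algebra_simps)
  then have "2 * sqrt ((1 - p) * (1 - u)) \<le> (1 - p) + (1 - u)"
    by (simp only: real_sqrt_mult)
  ultimately show ?thesis by linarith
qed

lemma AE_self_similar_unit_interval:
  fixes p u :: real and \<mu> :: "real measure"
  assumes p: "0 < p" "p \<le> 1" and u: "0 < u" "u < 1"
    and "prob_space \<mu>" and sets_\<mu>: "sets \<mu> = sets borel" and "emeasure \<mu> {0..1} = 1"
    and self_similar: "\<And>A. A \<in> sets borel \<Longrightarrow>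
           emeasure \<mu> A =
             ennreal (1 - p) * emeasure \<mu> ((\<lambda>x. u + (1 - u) * x) -` A)
             + ennreal p * emeasure \<mu> ((\<lambda>x. u * x) -` A)"
  shows "AE x in \<mu>. 0 \<le> x \<and> x < 1"
proof -
  interpret prob_space \<mu> by fact
  have events[simp]: "A \<in> events" if "A \<in> sets borel" for A
    using that sets_\<mu> by simp
  have "prob {0..1} = 1"
    using \<open>emeasure \<mu> {0..1} = 1\<close> by (simp add: emeasure_eq_measure)
  then have unit_interval: "AE x in \<mu>. x \<in> {0..1}"
    by (subst AE_in_set_eq_1) auto
  have "1 < 1 / u"
    using u by simp
  then have "AE x in \<mu>. x \<notin> {1 / u}"
    using unit_interval by (elim eventually_mono) auto
  then have "prob {1 / u} = 0"
    by (subst prob_eq_0) auto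
  moreover have "u + (1 - u) * x = 1 \<longleftrightarrow> (1 - u) * (x - 1) = 0" for x
    by (auto simp: algebra_simps)
  then have "(\<lambda>x. u + (1 - u) * x) -` {1} = {1}"
    using u by auto
  moreover have "(\<lambda>x. u * x) -` {1} = {1 / u}"
    using u by (auto simp: field_simps)
  ultimately have "ennreal (prob {1}) = ennreal ((1 - p) * prob {1})"
    using self_similar[of "{1}"] p by (simp add: emeasure_eq_measure ennreal_mult)
  then have "prob {1} = (1 - p) * prob {1}"
    using p by (subst (asm) ennreal_inj) auto
  then have "prob {1} = 0"
    using p by (simp add: algebra_simps)
  then have "AE x in \<mu>. x \<noteq> 1"
    by (subst (asm) prob_eq_0) auto
  with unit_interval show ?thesis
    by eventually_elim auto
qed

theorem proposition5:
  fixes p u :: real and \<mu> :: "real measure"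
  assumes "0 < p" "p < 1" "0 < u" "u < 1" "u \<noteq> p"
    and "prob_space \<mu>" "sets \<mu> = sets borel"
    and "emeasure \<mu> {0..1} = 1"
    and "\<And>A. A \<in> sets borel \<Longrightarrow>
           emeasure \<mu> A =
             ennreal (1 - p) * emeasure \<mu> ((\<lambda>x. u + (1 - u) * x) -` A)
             + ennreal p * emeasure \<mu> ((\<lambda>x. u * x) -` A)"
  shows "singular_lebesgue \<mu>"
proof -
  interpret prob_space \<mu> by fact
  have support: "AE x in \<mu>. 0 \<le> x \<and> x < 1"
    using assms(2) by (intro AE_self_similar_unit_interval[OF assms(1) _ assms(3,4,6-9)]) simp
  define a0 where "a0 = sqrt ((1 - p) / (1 - u))"
  define a1 where "a1 = sqrt (p / u)"
  define \<rho> where "\<rho> = sqrt (p * u) + sqrt ((1 - p) * (1 - u))"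
  have a: "0 < a0" "0 < a1"
    using assms(1-4) by (auto simp: a0_def a1_def)
  have \<rho>: "0 \<le> \<rho>" "\<rho> < 1"
    using assms(1-5) sqrt_mult_add_sqrt_mult_lt_1[of p u] by (auto simp: \<rho>_def)
  have weights: "(1 - u) * a0 + u * a1 = \<rho>" "(1 - p) * inverse a0 + p * inverse a1 = \<rho>"
    using assms(1-4)
    by (simp_all add: a0_def a1_def \<rho>_def mult_sqrt_divide real_sqrt_inverse[symmetric] mult.commute)
  have "(\<integral>\<^sup>+x. ennreal (digit_product u a0 a1 n x) \<partial>uniform_measure lborel {0..<1}) = ennreal (\<rho> ^ n)" for n
    using assms(3,4) a weights by (simp add: nn_integral_digit_product_uniform)
  moreover have "(\<integral>\<^sup>+x. ennreal (inverse (digit_product u a0 a1 n x)) \<partial>\<mu>) = ennreal (\<rho> ^ n)" for n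
    using assms(1-4) a weights
    by (subst digit_product_inverse[symmetric],
        subst nn_integral_digit_product[OF assms(7,3,4) _ _ _ _ support
          nn_integral_self_similar[OF assms(7) _ _ assms(9)]])
       (auto simp: emeasure_space_1)
  ultimately show ?thesis
    using assms(7) support a \<rho>
    by (intro singular_lebesgueI_ratio_bounds[where g = "digit_product u a0 a1" and r = \<rho>])
       (auto simp: digit_product_pos)
qed

end
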